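(* Let $X_1$ and $X_2$ be independent random variables on $[0,\infty)$ with probability densities $p_1(x)$ and $p_2(x)$, respectively, and let $\theta_1,\theta_2$ be uniformly distributed on $[0,1]$, independent of each other and of $X_1,X_2$. Put $X=e^{2\pi i\theta_1}X_1+e^{2\pi i\theta_2}X_2$ and $W(s)=\mathsf{E}(|X|^s)$. Assume the variables are sufficiently nice that the quantities below are finite and differentiation in $s$ under the integral sign is permitted. Then $$ W'(0)=\mathsf{E}(\log|X|)=\int_0^\infty\!\!\int_0^\infty p_1(x)\,p_2(y)\,\max\{\log x,\log y\}\,\mathrm{d}y\,\mathrm{d}x . $$
   Context: $X$ describes a two-step random walk in the plane whose first step has length $X_1$ and second step has length $X_2$, each taken in a uniformly random direction; $W'(0)$ denotes the derivative of $W(s)$ with respect to $s$ at $s=0$. *)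

theory Defs
  imports "HOL-Probability.Probability"
begin

definition walk2 :: "real \<Rightarrow> real \<Rightarrow> real \<Rightarrow> real \<Rightarrow> complex" where
  "walk2 x1 x2 t1 t2 = cis (2 * pi * t1) * complex_of_real x1 + cis (2 * pi * t2) * complex_of_real x2"

end

theory Submission
  imports Defs
begin

(* For |s| <= e/2 the difference quotients (|X| powr s - 1) / s are dominated by
   (|X| powr e + |X| powr -e) / (e/2), so W may be differentiated under the expectation and
   W'(0) = E ln |X|.  Up to a rotation, |X| = |a + b e^(2 pi i t)| with a = max X1 X2 and
   b = min X1 X2, and by Jensen's formula the logarithm of |1 + (b/a) e^(2 pi i t)| has mean zero
   over the circle; so averaging ln |X| over the second angle leaves max (ln X1) (ln X2), and
   integrating against the densities (Fubini) gives the double integral. *)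

lemma integral_cos_multiple_unit_interval:
  fixes c :: real
  assumes "n \<ge> 1"
  shows "(\<integral>t. indicator {0..1} t * cos (real n * (2 * pi * t + c)) \<partial>lborel) = 0"
proof -
  have "(\<integral>t. indicator {0..1} t *\<^sub>R cos (real n * (2 * pi * t + c)) \<partial>lborel)
      = sin (real n * (2 * pi * 1 + c)) / (2 * pi * n) - sin (real n * (2 * pi * 0 + c)) / (2 * pi * n)"
  proof (rule integral_FTC_atLeastAtMost)
    fix x :: real
    show "((\<lambda>t. sin (real n * (2 * pi * t + c)) / (2 * pi * n)) has_vector_derivative cos (real n * (2 * pi * x + c)))
        (at x within {0..1})"
      unfolding has_real_derivative_iff_has_vector_derivative[symmetric]
      using assms by (auto intro!: derivative_eq_intros simp: field_simps)
  qed (auto intro!: continuous_intros)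
  also have "real n * (2 * pi * 1 + c) = real n * c + 2 * real n * pi"
    by (simp add: algebra_simps)
  finally show ?thesis by (simp add: sin_add)
qed

(* The term n = 0 vanishes because x / 0 = 0. *)
lemma sums_ln_norm_one_plus_rcis:
  fixes r c :: real
  assumes "0 \<le> r" "r < 1"
  shows "(\<lambda>n. - ((-r)^n) / real n * cos (real n * c)) sums ln (cmod (1 + of_real r * cis c))"
proof -
  have small: "cmod (of_real r * cis c) < 1" using assms by (simp add: norm_mult)
  then have "1 + of_real r * cis c \<noteq> 0"
    by (auto simp: add_eq_0_iff)
  then have ln_eq: "ln (cmod (1 + of_real r * cis c)) = Re (Ln (1 + of_real r * cis c))"
    by (simp add: Re_Ln)
  have re: "Re (- ((-(of_real r * cis c))^n) / of_nat n) = - ((-r)^n) / real n * cos (real n * c)" for n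
  proof -
    have "(-(of_real r * cis c))^n = (of_real (-r) * cis c)^n"
      by simp
    also have "\<dots> = of_real ((-r)^n) * cis (real n * c)"
      by (simp only: power_mult_distrib Complex.DeMoivre of_real_power)
    finally show ?thesis by (simp add: Re_divide_of_nat)
  qed
  show ?thesis
    using sums_Re[OF Ln_series'[OF small]] by (simp only: re ln_eq)
qed

lemma integral_ln_norm_one_plus_rcis:
  fixes r c :: real
  assumes "0 \<le> r" "r < 1"
  shows "(\<integral>t. indicator {0..1} t * ln (cmod (1 + of_real r * cis (2 * pi * t + c))) \<partial>lborel) = 0"
proof -
  define a :: "nat \<Rightarrow> real" where "a n = - ((-r)^n) / real n" for n
  define f where "f = (\<lambda>n t. indicator {0..1} t * (a n * cos (real n * (2 * pi * t + c))))"
  have a_le: "\<bar>a n\<bar> \<le> r^n" for n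
  proof (cases "n = 0")
    case False
    then have "r^n * 1 \<le> r^n * real n" using assms by (intro mult_left_mono) auto
    then show ?thesis using assms False by (simp add: a_def abs_divide power_abs divide_le_eq)
  qed (simp add: a_def)
  have f_le: "norm (f n t) \<le> r^n * indicator {0..1} t" for n t
  proof -
    have "\<bar>a n * cos (real n * (2 * pi * t + c))\<bar> \<le> r^n"
      using mult_mono[OF a_le abs_cos_le_one] assms by (simp add: abs_mult)
    then show ?thesis by (auto simp: f_def indicator_def)
  qed
  have f_int: "integrable lborel (f n)" for n
  proof -
    have "integrable lborel (\<lambda>t. a n * cos (real n * (2 * pi * t + c)) * indicator {0..1} t)"
      by (intro borel_integrable_atLeastAtMost continuous_intros)
    then show ?thesis unfolding f_def by (simp add: mult.commute)
  qed
  have f_zero: "integral\<^sup>L lborel (f n) = 0" for n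
  proof (cases "n = 0")
    case False
    have "integral\<^sup>L lborel (f n) = a n * (\<integral>t. indicator {0..1} t * cos (real n * (2 * pi * t + c)) \<partial>lborel)"
      unfolding f_def by (subst integral_mult_right_zero[symmetric]) (simp add: mult_ac)
    then show ?thesis
      using integral_cos_multiple_unit_interval[of n c] False by simp
  qed (simp add: f_def a_def)
  have geometric: "summable (\<lambda>n. r^n)" using assms by simp
  have "(\<lambda>n. f n t) sums (indicator {0..1} t * ln (cmod (1 + of_real r * cis (2 * pi * t + c))))" for t
    unfolding f_def a_def by (intro sums_mult sums_ln_norm_one_plus_rcis assms)
  then have "(\<integral>t. indicator {0..1} t * ln (cmod (1 + of_real r * cis (2 * pi * t + c))) \<partial>lborel)
      = (\<integral>t. (\<Sum>n. f n t) \<partial>lborel)"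
    by (simp add: sums_iff)
  also have "\<dots> = (\<Sum>n. integral\<^sup>L lborel (f n))"
  proof (rule integral_suminf[OF f_int])
    show "AE t in lborel. summable (\<lambda>n. norm (f n t))"
    proof (intro AE_I2 summable_comparison_test[OF _ geometric] exI[of _ 0] allI impI)
      fix t n
      show "norm (norm (f n t)) \<le> r^n"
        using order_trans[OF f_le[of n t], of "r^n"] assms by (simp add: indicator_def)
    qed
    have "(\<integral>t. norm (f n t) \<partial>lborel) \<le> (\<integral>t. r^n * indicator {0..1} (t::real) \<partial>lborel)" for n
      using f_int[of n] f_le[of n] by (intro integral_mono) auto
    then have "(\<integral>t. norm (f n t) \<partial>lborel) \<le> r^n" for n
      by simp
    then show "summable (\<lambda>n. \<integral>t. norm (f n t) \<partial>lborel)"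
      by (intro summable_comparison_test[OF _ geometric]) auto
  qed
  also have "\<dots> = 0" by (simp add: f_zero)
  finally show ?thesis .
qed

lemma norm_walk2: "cmod (walk2 x y s t) = cmod (of_real x + of_real y * cis (2 * pi * t - 2 * pi * s))"
proof -
  have "cis (2 * pi * s) * cis (2 * pi * t - 2 * pi * s) = cis (2 * pi * t)"
    by (simp add: cis_mult)
  then have "walk2 x y s t = cis (2 * pi * s) * (of_real x + of_real y * cis (2 * pi * t - 2 * pi * s))"
    by (simp add: walk2_def algebra_simps)
  then show ?thesis by (simp add: norm_mult)
qed

lemma norm_of_real_add_mult_cis_swap:
  "cmod (of_real a + of_real b * cis u) = cmod (of_real b + of_real a * cis u)"
proof -
  have "of_real a + of_real b * cis u = cis u * cnj (of_real b + of_real a * cis u)"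
    by (simp add: algebra_simps cis_cnj cis_mult)
  then show ?thesis by (simp only: norm_mult norm_cis mult_1_left complex_mod_cnj)
qed

lemma integral_ln_norm_walk2:
  assumes "0 < x" "0 < y" "x \<noteq> y"
  shows "(\<integral>t. indicator {0..1} t * ln (cmod (walk2 x y s t)) \<partial>lborel) = max (ln x) (ln y)"
proof -
  define a where "a = max x y"
  define r where "r = min x y / a"
  have a: "0 < a" "max (ln x) (ln y) = ln a" using assms by (auto simp: a_def max_def)
  have r: "0 \<le> r" "r < 1" using assms by (auto simp: r_def a_def min_def max_def)
  define L where "L t = ln (cmod (1 + of_real r * cis (2 * pi * t - 2 * pi * s)))" for t
  have nonzero: "1 + of_real r * cis u \<noteq> 0" for u
  proof
    assume "1 + of_real r * cis u = 0"
    then have "cmod (of_real r * cis u) = 1" by (simp add: add_eq_0_iff)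
    with r show False by (simp add: norm_mult)
  qed
  have "cmod (walk2 x y s t) = cmod (of_real a * (1 + of_real r * cis (2 * pi * t - 2 * pi * s)))" for t
  proof -
    have "cmod (walk2 x y s t) = cmod (of_real a + of_real (min x y) * cis (2 * pi * t - 2 * pi * s))"
      unfolding norm_walk2 a_def
      by (cases "x \<le> y") (simp_all add: max_def min_def norm_of_real_add_mult_cis_swap)
    then show ?thesis
      using a by (simp add: r_def algebra_simps)
  qed
  then have "ln (cmod (walk2 x y s t)) = ln a + L t" for t
    using a nonzero by (simp add: L_def norm_mult ln_mult)
  then have "(\<integral>t. indicator {0..1} t * ln (cmod (walk2 x y s t)) \<partial>lborel)
      = (\<integral>t. ln a * indicator {0..1} t + indicator {0..1} t * L t \<partial>lborel)"
    by (simp add: algebra_simps)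
  also have "\<dots> = ln a + (\<integral>t. indicator {0..1} t * L t \<partial>lborel)"
  proof -
    have "set_integrable lborel {0..1} L"
      unfolding L_def using nonzero
      by (intro borel_integrable_atLeastAtMost' continuous_intros) auto
    then show ?thesis by (simp add: set_integrable_def)
  qed
  also have "(\<integral>t. indicator {0..1} t * L t \<partial>lborel) = 0"
    using integral_ln_norm_one_plus_rcis[OF r, of "- (2 * pi * s)"] by (simp add: L_def)
  finally show ?thesis using a by simp
qed

lemma exp_mult_abs_ln_le:
  fixes r a :: real
  assumes "0 < r"
  shows "exp (a * \<bar>ln r\<bar>) \<le> r powr a + r powr (- a)"
proof (cases "0 \<le> ln r")
  case True
  then have "exp (a * \<bar>ln r\<bar>) = r powr a" using assms by (simp add: powr_def)
  then show ?thesis by simp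
next
  case False
  then have "exp (a * \<bar>ln r\<bar>) = r powr (- a)" using assms by (simp add: powr_def)
  then show ?thesis by simp
qed

lemma abs_ln_le_powr:
  fixes r d :: real
  assumes "0 \<le> r" "0 < d"
  shows "\<bar>ln r\<bar> \<le> (r powr d + r powr (- d)) / d"
proof (cases "r = 0")
  case False
  then have "d * \<bar>ln r\<bar> \<le> exp (d * \<bar>ln r\<bar>)"
    using exp_ge_add_one_self[of "d * \<bar>ln r\<bar>"] by linarith
  also have "\<dots> \<le> r powr d + r powr (- d)"
    using exp_mult_abs_ln_le[of r d] assms False by simp
  finally show ?thesis using assms by (simp add: field_simps)
qed simp

lemma abs_exp_minus_one_le:
  fixes u :: real
  shows "\<bar>exp u - 1\<bar> \<le> \<bar>u\<bar> * exp \<bar>u\<bar>"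
proof (cases "0 \<le> u")
  case True
  have "(1 - u) * exp u \<le> exp (- u) * exp u"
    using exp_ge_add_one_self[of "- u"] by (intro mult_right_mono) auto
  then show ?thesis using True by (simp add: exp_minus field_simps)
next
  case False
  have "1 - exp u \<le> - u" using exp_ge_add_one_self[of u] by linarith
  also have "\<dots> \<le> - u * exp (- u)" using False by simp
  finally show ?thesis using False by simp
qed

lemma abs_powr_minus_powr_zero_le:
  fixes r d s :: real
  assumes "0 \<le> r" "0 < d" "\<bar>s\<bar> \<le> d"
  shows "\<bar>r powr s - r powr 0\<bar> \<le> \<bar>s\<bar> * ((r powr (2 * d) + r powr (- (2 * d))) / d)"
proof (cases "r = 0")
  case False
  then have r: "0 < r" using assms by simp
  have "d * \<bar>ln r\<bar> \<le> exp (d * \<bar>ln r\<bar>)"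
    using exp_ge_add_one_self[of "d * \<bar>ln r\<bar>"] by linarith
  then have ln_le: "\<bar>ln r\<bar> \<le> exp (d * \<bar>ln r\<bar>) / d"
    using assms by (simp add: field_simps)
  have "\<bar>r powr s - r powr 0\<bar> = \<bar>exp (s * ln r) - 1\<bar>"
    using r by (simp add: powr_def)
  also have "\<dots> \<le> \<bar>s * ln r\<bar> * exp \<bar>s * ln r\<bar>"
    by (rule abs_exp_minus_one_le)
  also have "\<dots> \<le> \<bar>s\<bar> * \<bar>ln r\<bar> * exp (d * \<bar>ln r\<bar>)"
    using mult_right_mono[OF assms(3), of "\<bar>ln r\<bar>"] by (auto simp: abs_mult intro!: mult_left_mono)
  also have "\<dots> \<le> \<bar>s\<bar> * (exp (d * \<bar>ln r\<bar>) / d) * exp (d * \<bar>ln r\<bar>)"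
    using ln_le by (intro mult_right_mono mult_left_mono) auto
  also have "\<dots> = \<bar>s\<bar> * (exp ((2 * d) * \<bar>ln r\<bar>) / d)"
    by (simp add: mult_exp_exp algebra_simps)
  also have "\<dots> \<le> \<bar>s\<bar> * ((r powr (2 * d) + r powr (- (2 * d))) / d)"
    using exp_mult_abs_ln_le[OF r, of "2 * d"] assms
    by (intro mult_left_mono divide_right_mono) auto
  finally show ?thesis .
qed simp

(* Also for r = 0: then s \<mapsto> 0 powr s is constantly 0, and ln 0 = 0. *)
lemma has_real_derivative_powr_exponent_0:
  fixes r :: real
  shows "((\<lambda>s. r powr s) has_real_derivative ln r) (at 0)"
  using has_real_derivative_const_powr[of "\<lambda>s. s" "\<lambda>_. 1" r 0]
  by (cases "r = 0") auto

lemma integral_dominated_convergence_at: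
  fixes s :: "'c::first_countable_topology \<Rightarrow> 'a \<Rightarrow> 'b::{banach, second_countable_topology}"
  assumes "f \<in> borel_measurable M" "\<And>t. s t \<in> borel_measurable M" "integrable M w"
    and lim: "AE x in M. ((\<lambda>t. s t x) \<longlongrightarrow> f x) (at a)"
    and bound: "\<forall>\<^sub>F t in at a. AE x in M. norm (s t x) \<le> w x"
  shows "((\<lambda>t. integral\<^sup>L M (s t)) \<longlongrightarrow> integral\<^sup>L M f) (at a)"
  unfolding tendsto_at_iff_sequentially
proof (intro allI impI)
  fix X :: "nat \<Rightarrow> 'c"
  assume "\<forall>i. X i \<in> UNIV - {a}" "X \<longlonglongrightarrow> a"
  then have X: "filterlim X (at a) sequentially"
    by (simp add: filterlim_at)
  from filterlim_iff[THEN iffD1, OF X, rule_format, OF bound]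
  obtain N where N: "\<And>n. N \<le> n \<Longrightarrow> AE x in M. norm (s (X n) x) \<le> w x"
    by (auto simp: eventually_sequentially)
  have "(\<lambda>n. integral\<^sup>L M (s (X n))) \<longlonglongrightarrow> integral\<^sup>L M f"
  proof (rule LIMSEQ_offset, rule integral_dominated_convergence)
    show "AE x in M. norm (s (X (n + N)) x) \<le> w x" for n
      by (rule N) simp
    show "AE x in M. (\<lambda>n. s (X (n + N)) x) \<longlonglongrightarrow> f x"
      using lim by eventually_elim (intro LIMSEQ_ignore_initial_segment filterlim_compose[OF _ X])
  qed fact+
  then show "((\<lambda>t. integral\<^sup>L M (s t)) \<circ> X) \<longlonglongrightarrow> integral\<^sup>L M f"
    by (simp add: comp_def)
qed

lemma integrable_ln_if_integrable_powr:
  fixes R :: "'a \<Rightarrow> real"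
  assumes [measurable]: "R \<in> borel_measurable M" and "\<And>x. 0 \<le> R x" and "0 < e"
    and "integrable M (\<lambda>x. R x powr e)" "integrable M (\<lambda>x. R x powr (- e))"
  shows "integrable M (\<lambda>x. ln (R x))"
proof (rule Bochner_Integration.integrable_bound)
  show "integrable M (\<lambda>x. (R x powr e + R x powr (- e)) / e)"
    using assms by (intro integrable_divide Bochner_Integration.integrable_add)
  show "AE x in M. norm (ln (R x)) \<le> norm ((R x powr e + R x powr (- e)) / e)"
    using abs_ln_le_powr[of "R _" e] assms by (intro AE_I2) force
qed measurable

lemma (in finite_measure) has_real_derivative_integral_powr_0:
  fixes R :: "'a \<Rightarrow> real"
  assumes [measurable]: "R \<in> borel_measurable M" and R_nonneg: "\<And>x. 0 \<le> R x" and "0 < e"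
    and "integrable M (\<lambda>x. R x powr e)" "integrable M (\<lambda>x. R x powr (- e))"
  shows "((\<lambda>s. \<integral>x. R x powr s \<partial>M) has_real_derivative (\<integral>x. ln (R x) \<partial>M)) (at 0)"
proof -
  define d where "d = e / 2"
  have d: "0 < d" "2 * d = e" using \<open>0 < e\<close> by (auto simp: d_def)
  define w where "w x = (R x powr e + R x powr (- e)) / d" for x
  \<comment> \<open>\<open>R x powr 0\<close> rather than 1, since \<open>0 powr 0 = 0\<close>\<close>
  define q where "q s x = (R x powr s - R x powr 0) / s" for s x
  have w_int: "integrable M w"
    unfolding w_def using assms by (intro integrable_divide Bochner_Integration.integrable_add)
  have q_le: "norm (q s x) \<le> w x" if "s \<noteq> 0" "\<bar>s\<bar> \<le> d" for s x
    using abs_powr_minus_powr_zero_le[OF R_nonneg d(1) that(2), of x, unfolded d(2)] that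
    by (simp add: q_def w_def abs_divide divide_le_eq mult.commute)
  have powr0_int: "integrable M (\<lambda>x. R x powr 0)"
    by (rule integrable_const_bound[where B=1]) auto
  have difference_quotient: "((\<integral>x. R x powr s \<partial>M) - (\<integral>x. R x powr 0 \<partial>M)) / (s - 0) = (\<integral>x. q s x \<partial>M)"
    if "s \<noteq> 0" "\<bar>s\<bar> \<le> d" for s
  proof -
    have q_int: "integrable M (q s)"
    proof (rule Bochner_Integration.integrable_bound[OF w_int])
      show "q s \<in> borel_measurable M" unfolding q_def by measurable
      show "AE x in M. norm (q s x) \<le> norm (w x)"
        using order_trans[OF q_le[OF that] abs_ge_self] by (intro AE_I2) simp
    qed
    have "(\<lambda>x. R x powr s) = (\<lambda>x. s * q s x + R x powr 0)"
      using that by (auto simp: q_def)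
    then have "integrable M (\<lambda>x. R x powr s)"
      using q_int powr0_int by simp
    then show ?thesis
      using powr0_int by (simp add: q_def)
  qed
  have near0: "\<forall>\<^sub>F s in at 0. s \<noteq> 0 \<and> \<bar>s\<bar> \<le> d"
    using d(1) by (auto simp: eventually_at dist_real_def intro!: exI[of _ d])
  have "((\<lambda>s. \<integral>x. q s x \<partial>M) \<longlongrightarrow> (\<integral>x. ln (R x) \<partial>M)) (at 0)"
  proof (rule integral_dominated_convergence_at[OF _ _ w_int])
    show "AE x in M. ((\<lambda>s. q s x) \<longlongrightarrow> ln (R x)) (at 0)"
      using has_real_derivative_powr_exponent_0 by (simp add: q_def has_field_derivative_iff)
    show "\<forall>\<^sub>F s in at 0. AE x in M. norm (q s x) \<le> w x"
      using near0 q_le by (auto elim!: eventually_mono intro!: AE_I2)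
  qed (auto simp: q_def)
  moreover have "\<forall>\<^sub>F s in at 0. (\<integral>x. q s x \<partial>M) = ((\<integral>x. R x powr s \<partial>M) - (\<integral>x. R x powr 0 \<partial>M)) / (s - 0)"
    using near0 difference_quotient by (auto elim!: eventually_mono)
  ultimately show ?thesis
    unfolding has_field_derivative_iff by (rule Lim_transform_eventually)
qed

lemma (in prob_space) indep_var_compose_pair_distr:
  assumes "indep_var S A T B" and [measurable]: "h1 \<in> measurable S N1" "h2 \<in> measurable T N2"
  shows "distr M N1 (\<lambda>\<omega>. h1 (A \<omega>)) \<Otimes>\<^sub>M distr M N2 (\<lambda>\<omega>. h2 (B \<omega>))
    = distr M (N1 \<Otimes>\<^sub>M N2) (\<lambda>\<omega>. (h1 (A \<omega>), h2 (B \<omega>)))"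
proof -
  have [measurable]: "random_variable S A" "random_variable T B"
    and AB: "distr M S A \<Otimes>\<^sub>M distr M T B = distr M (S \<Otimes>\<^sub>M T) (\<lambda>x. (A x, B x))"
    using assms(1) unfolding indep_var_distribution_eq by auto
  interpret B: prob_space "distr M N2 (\<lambda>\<omega>. h2 (B \<omega>))" by (rule prob_space_distr) simp
  have distr_A: "distr M N1 (\<lambda>\<omega>. h1 (A \<omega>)) = distr (distr M S A) N1 h1"
    by (subst distr_distr) (auto simp: comp_def)
  have distr_B: "distr M N2 (\<lambda>\<omega>. h2 (B \<omega>)) = distr (distr M T B) N2 h2"
    by (subst distr_distr) (auto simp: comp_def)
  have "distr M N1 (\<lambda>\<omega>. h1 (A \<omega>)) \<Otimes>\<^sub>M distr M N2 (\<lambda>\<omega>. h2 (B \<omega>))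
      = distr (distr M S A \<Otimes>\<^sub>M distr M T B) (N1 \<Otimes>\<^sub>M N2) (\<lambda>(x, y). (h1 x, h2 y))"
    unfolding distr_A distr_B
    by (rule pair_measure_distr) (auto simp flip: distr_B intro: B.sigma_finite_measure_axioms)
  also have "\<dots> = distr M (N1 \<Otimes>\<^sub>M N2) (\<lambda>\<omega>. (h1 (A \<omega>), h2 (B \<omega>)))"
    unfolding AB by (subst distr_distr) (auto simp: comp_def)
  finally show ?thesis .
qed

lemma (in prob_space) distributed_indep_vars_nested_pairs:
  fixes X :: "nat \<Rightarrow> 'a \<Rightarrow> real" and f :: "nat \<Rightarrow> real \<Rightarrow> real"
  assumes indep: "indep_vars (\<lambda>_. borel) X {0, 1, 2, 3}"
    and dens: "\<And>i. i \<in> {0, 1, 2, 3} \<Longrightarrow> distributed M lborel (X i) (\<lambda>x. ennreal (f i x))"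
    and nonneg: "\<And>i x. 0 \<le> f i x" and [measurable]: "\<And>i. f i \<in> borel_measurable borel"
  shows "distributed M (((lborel \<Otimes>\<^sub>M lborel) \<Otimes>\<^sub>M lborel) \<Otimes>\<^sub>M lborel)
           (\<lambda>\<omega>. (((X 0 \<omega>, X 1 \<omega>), X 2 \<omega>), X 3 \<omega>))
           (\<lambda>z. ennreal (case z of (((x, y), s), t) \<Rightarrow> f 0 x * f 1 y * f 2 s * f 3 t))"
proof -
  have split: "distr M N1 (\<lambda>\<omega>. g1 (\<lambda>i\<in>A. X i \<omega>)) \<Otimes>\<^sub>M distr M N2 (\<lambda>\<omega>. g2 (\<lambda>i\<in>B. X i \<omega>))
      = distr M (N1 \<Otimes>\<^sub>M N2) (\<lambda>\<omega>. (g1 (\<lambda>i\<in>A. X i \<omega>), g2 (\<lambda>i\<in>B. X i \<omega>)))"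
    if "A \<inter> B = {}" "A \<subseteq> {0, 1, 2, 3}" "B \<subseteq> {0, 1, 2, 3}"
      "g1 \<in> measurable (PiM A (\<lambda>_. borel)) N1" "g2 \<in> measurable (PiM B (\<lambda>_. borel)) N2"
    for A B N1 N2 g1 g2
    by (rule indep_var_compose_pair_distr[OF indep_var_restrict[OF indep that(1-3)] that(4,5)])
  have sf: "sigma_finite_measure (lborel::real measure)"
    "sigma_finite_measure ((lborel::real measure) \<Otimes>\<^sub>M lborel)"
    "sigma_finite_measure (((lborel::real measure) \<Otimes>\<^sub>M lborel) \<Otimes>\<^sub>M lborel)"
    by (intro sigma_finite_pair_measure lborel.sigma_finite_measure_axioms)+
  have "distr M lborel (X 0) \<Otimes>\<^sub>M distr M lborel (X 1) = distr M (lborel \<Otimes>\<^sub>M lborel) (\<lambda>\<omega>. (X 0 \<omega>, X 1 \<omega>))"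
    using split[of "{0}" "{1}" "\<lambda>h. h 0" lborel "\<lambda>h. h 1" lborel] by simp
  from distributed_joint_indep'[OF sf(1,1) dens dens this]
  have dist01: "distributed M (lborel \<Otimes>\<^sub>M lborel) (\<lambda>\<omega>. (X 0 \<omega>, X 1 \<omega>))
      (\<lambda>(x, y). ennreal (f 0 x) * ennreal (f 1 y))" by simp
  have prod012: "distr M (lborel \<Otimes>\<^sub>M lborel) (\<lambda>\<omega>. (X 0 \<omega>, X 1 \<omega>)) \<Otimes>\<^sub>M distr M lborel (X 2)
      = distr M ((lborel \<Otimes>\<^sub>M lborel) \<Otimes>\<^sub>M lborel) (\<lambda>\<omega>. ((X 0 \<omega>, X 1 \<omega>), X 2 \<omega>))"
    using split[of "{0, 1}" "{2}" "\<lambda>h. (h 0, h 1)" "lborel \<Otimes>\<^sub>M lborel" "\<lambda>h. h 2" lborel] by simp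
  have dist012: "distributed M ((lborel \<Otimes>\<^sub>M lborel) \<Otimes>\<^sub>M lborel) (\<lambda>\<omega>. ((X 0 \<omega>, X 1 \<omega>), X 2 \<omega>))
      (\<lambda>(a, s). (case a of (x, y) \<Rightarrow> ennreal (f 0 x) * ennreal (f 1 y)) * ennreal (f 2 s))"
    using distributed_joint_indep'[OF sf(2,1) dist01 dens[of 2, simplified] prod012] by simp
  have prod0123: "distr M ((lborel \<Otimes>\<^sub>M lborel) \<Otimes>\<^sub>M lborel) (\<lambda>\<omega>. ((X 0 \<omega>, X 1 \<omega>), X 2 \<omega>))
      \<Otimes>\<^sub>M distr M lborel (X 3)
      = distr M (((lborel \<Otimes>\<^sub>M lborel) \<Otimes>\<^sub>M lborel) \<Otimes>\<^sub>M lborel) (\<lambda>\<omega>. (((X 0 \<omega>, X 1 \<omega>), X 2 \<omega>), X 3 \<omega>))"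
    using split[of "{0, 1, 2}" "{3}" "\<lambda>h. ((h 0, h 1), h 2)" "(lborel \<Otimes>\<^sub>M lborel) \<Otimes>\<^sub>M lborel"
        "\<lambda>h. h 3" lborel] by simp
  have "distributed M (((lborel \<Otimes>\<^sub>M lborel) \<Otimes>\<^sub>M lborel) \<Otimes>\<^sub>M lborel)
      (\<lambda>\<omega>. (((X 0 \<omega>, X 1 \<omega>), X 2 \<omega>), X 3 \<omega>))
      (\<lambda>(b, t). (case b of (a, s) \<Rightarrow> (case a of (x, y) \<Rightarrow> ennreal (f 0 x) * ennreal (f 1 y)) * ennreal (f 2 s))
        * ennreal (f 3 t))"
    using distributed_joint_indep'[OF sf(3,1) dist012 dens[of 3, simplified] prod0123] by simp
  then show ?thesis
  proof (rule distributed_cong_density[THEN iffD1, rotated 3])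
    show "AE z in ((lborel \<Otimes>\<^sub>M lborel) \<Otimes>\<^sub>M lborel) \<Otimes>\<^sub>M lborel.
        (case z of (b, t) \<Rightarrow> (case b of (a, s) \<Rightarrow> (case a of (x, y) \<Rightarrow> ennreal (f 0 x) * ennreal (f 1 y))
          * ennreal (f 2 s)) * ennreal (f 3 t))
      = ennreal (case z of (((x, y), s), t) \<Rightarrow> f 0 x * f 1 y * f 2 s * f 3 t)"
      by (intro AE_I2) (auto simp: nonneg ennreal_mult split: prod.split)
  qed measurable
qed

lemma AE_lborel_pair_nonzero_distinct:
  "AE z in (lborel::real measure) \<Otimes>\<^sub>M lborel. fst z \<noteq> 0 \<and> snd z \<noteq> 0 \<and> fst z \<noteq> snd z"
proof (rule lborel_pair.AE_pair_measure)
  show "AE x in lborel. AE y in lborel. fst (x, y) \<noteq> 0 \<and> snd (x, y) \<noteq> (0::real) \<and> fst (x, y) \<noteq> snd (x, y)"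
    using AE_lborel_singleton[of "0::real"]
  proof eventually_elim
    case (elim x)
    show ?case using AE_lborel_singleton[of "0::real"] AE_lborel_singleton[of x]
      by eventually_elim (use elim in auto)
  qed
qed measurable

lemma integral_ln_norm_walk2_density:
  fixes p1 p2 :: "real \<Rightarrow> real"
  assumes [measurable]: "p1 \<in> borel_measurable borel" "p2 \<in> borel_measurable borel"
    and supp: "\<And>x. x < 0 \<Longrightarrow> p1 x = 0" "\<And>x. x < 0 \<Longrightarrow> p2 x = 0"
    and int: "integrable (((lborel \<Otimes>\<^sub>M lborel) \<Otimes>\<^sub>M lborel) \<Otimes>\<^sub>M lborel)
      (\<lambda>(((x, y), s), t). p1 x * p2 y * indicator {0..1} s * indicator {0..1} t * ln (cmod (walk2 x y s t)))"
  shows "(\<integral>(((x, y), s), t). p1 x * p2 y * indicator {0..1} s * indicator {0..1} t * ln (cmod (walk2 x y s t))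
      \<partial>(((lborel \<Otimes>\<^sub>M lborel) \<Otimes>\<^sub>M lborel) \<Otimes>\<^sub>M lborel))
    = (LINT x:{0..}|lborel. LINT y:{0..}|lborel. p1 x * p2 y * max (ln x) (ln y))"
proof -
  let ?Q1 = "(lborel::real measure) \<Otimes>\<^sub>M (lborel::real measure)"
  let ?Q2 = "?Q1 \<Otimes>\<^sub>M (lborel::real measure)"
  define F :: "((real \<times> real) \<times> real) \<times> real \<Rightarrow> real" where
    "F = (\<lambda>(((x, y), s), t). p1 x * p2 y * indicator {0..1} s * indicator {0..1} t * ln (cmod (walk2 x y s t)))"
  define G :: "(real \<times> real) \<times> real \<Rightarrow> real" where
    "G = (\<lambda>((x, y), s). p1 x * p2 y * indicator {0..1} s * max (ln x) (ln y))"
  define H :: "real \<times> real \<Rightarrow> real" where "H = (\<lambda>(x, y). p1 x * p2 y * max (ln x) (ln y))"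
  interpret Q2: pair_sigma_finite ?Q2 "lborel::real measure"
    by (intro pair_sigma_finite.intro sigma_finite_pair_measure lborel.sigma_finite_measure_axioms)
  interpret Q1: pair_sigma_finite ?Q1 "lborel::real measure"
    by (intro pair_sigma_finite.intro sigma_finite_pair_measure lborel.sigma_finite_measure_axioms)
  have F_int: "integrable (?Q2 \<Otimes>\<^sub>M lborel) F"
    using int unfolding F_def .
  have [measurable]: "G \<in> borel_measurable ?Q2" "H \<in> borel_measurable ?Q1"
    unfolding G_def H_def split_beta' by measurable
  have "AE a in ?Q2. fst (fst a) \<noteq> 0 \<and> snd (fst a) \<noteq> 0 \<and> fst (fst a) \<noteq> snd (fst a)"
  proof (rule Q1.AE_pair_measure)
    show "AE b in ?Q1. AE s in lborel. fst (fst (b, s)) \<noteq> 0 \<and> snd (fst (b, s)) \<noteq> 0 \<and> fst (fst (b, s)) \<noteq> snd (fst (b, s))"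
      using AE_lborel_pair_nonzero_distinct by eventually_elim simp
  qed measurable
  then have inner_t: "AE a in ?Q2. (\<integral>t. F (a, t) \<partial>lborel) = G a"
  proof eventually_elim
    case (elim a)
    obtain x y s where a: "a = ((x, y), s)" by (metis prod.collapse)
    have "(\<integral>t. F (a, t) \<partial>lborel)
        = p1 x * p2 y * indicator {0..1} s * (\<integral>t. indicator {0..1} t * ln (cmod (walk2 x y s t)) \<partial>lborel)"
      by (simp add: a F_def mult.assoc flip: integral_mult_right_zero)
    also have "\<dots> = G a"
    proof (cases "0 < x \<and> 0 < y")
      case True
      then show ?thesis using elim integral_ln_norm_walk2[of x y s] by (simp add: a G_def)
    next
      case False
      then have "p1 x * p2 y = 0" using elim supp by (force simp: a)
      then show ?thesis by (simp add: a G_def)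
    qed
    finally show ?case .
  qed
  have G_int: "integrable ?Q2 G"
    using integrable_cong_AE[OF _ _ inner_t] Q2.integrable_fst'[OF F_int]
    by (auto intro: borel_measurable_integrable)
  have inner_s: "(\<integral>s. G (b, s) \<partial>lborel) = H b" for b
    by (simp add: G_def H_def split_beta mult.commute flip: integral_mult_right_zero)
  have H_int: "integrable ?Q1 H"
    using Q1.integrable_fst'[OF G_int] by (simp add: inner_s)
  have "integral\<^sup>L (?Q2 \<Otimes>\<^sub>M lborel) F = (\<integral>a. (\<integral>t. F (a, t) \<partial>lborel) \<partial>?Q2)"
    using Q2.integral_fst'[OF F_int] by simp
  also have "\<dots> = integral\<^sup>L ?Q2 G"
    using inner_t by (intro integral_cong_AE) (auto intro: borel_measurable_integrable Q2.integrable_fst'[OF F_int])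
  also have "\<dots> = integral\<^sup>L ?Q1 H"
    using Q1.integral_fst'[OF G_int] by (simp add: inner_s)
  also have "\<dots> = (\<integral>x. (\<integral>y. H (x, y) \<partial>lborel) \<partial>lborel)"
    using lborel_pair.integral_fst'[OF H_int] by simp
  also have "\<dots> = (LINT x:{0..}|lborel. LINT y:{0..}|lborel. p1 x * p2 y * max (ln x) (ln y))"
    using supp unfolding set_lebesgue_integral_def H_def
    by (intro Bochner_Integration.integral_cong)
      (auto simp: indicator_def not_le intro!: Bochner_Integration.integral_cong)
  finally show ?thesis unfolding F_def .
qed

lemma (in prob_space) expectation_indep_vars_nested_pairs:
  fixes X :: "nat \<Rightarrow> 'a \<Rightarrow> real" and f :: "nat \<Rightarrow> real \<Rightarrow> real"
    and g :: "real \<Rightarrow> real \<Rightarrow> real \<Rightarrow> real \<Rightarrow> real"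
  assumes indep: "indep_vars (\<lambda>_. borel) X {0, 1, 2, 3}"
    and dens: "\<And>i. i \<in> {0, 1, 2, 3} \<Longrightarrow> distributed M lborel (X i) (\<lambda>x. ennreal (f i x))"
    and nonneg: "\<And>i x. 0 \<le> f i x" and f_meas: "\<And>i. f i \<in> borel_measurable borel"
    and g_meas: "(\<lambda>(((x, y), s), t). g x y s t) \<in> borel_measurable (((lborel \<Otimes>\<^sub>M lborel) \<Otimes>\<^sub>M lborel) \<Otimes>\<^sub>M lborel)"
    and g_int: "integrable M (\<lambda>\<omega>. g (X 0 \<omega>) (X 1 \<omega>) (X 2 \<omega>) (X 3 \<omega>))"
  shows "integrable (((lborel \<Otimes>\<^sub>M lborel) \<Otimes>\<^sub>M lborel) \<Otimes>\<^sub>M lborel)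
      (\<lambda>(((x, y), s), t). f 0 x * f 1 y * f 2 s * f 3 t * g x y s t)"
    and "expectation (\<lambda>\<omega>. g (X 0 \<omega>) (X 1 \<omega>) (X 2 \<omega>) (X 3 \<omega>))
      = (\<integral>(((x, y), s), t). f 0 x * f 1 y * f 2 s * f 3 t * g x y s t
          \<partial>(((lborel \<Otimes>\<^sub>M lborel) \<Otimes>\<^sub>M lborel) \<Otimes>\<^sub>M lborel))"
proof -
  note joint = distributed_indep_vars_nested_pairs[OF indep dens nonneg f_meas]
  have density_nonneg: "0 \<le> (case z of (((x, y), s), t) \<Rightarrow> f 0 x * f 1 y * f 2 s * f 3 t)" for z
    using nonneg by (auto split: prod.split)
  show "integrable (((lborel \<Otimes>\<^sub>M lborel) \<Otimes>\<^sub>M lborel) \<Otimes>\<^sub>M lborel)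
      (\<lambda>(((x, y), s), t). f 0 x * f 1 y * f 2 s * f 3 t * g x y s t)"
    using distributed_integrable[OF joint g_meas density_nonneg] g_int by (simp add: case_prod_beta split_beta')
  show "expectation (\<lambda>\<omega>. g (X 0 \<omega>) (X 1 \<omega>) (X 2 \<omega>) (X 3 \<omega>))
      = (\<integral>(((x, y), s), t). f 0 x * f 1 y * f 2 s * f 3 t * g x y s t
          \<partial>(((lborel \<Otimes>\<^sub>M lborel) \<Otimes>\<^sub>M lborel) \<Otimes>\<^sub>M lborel))"
    using distributed_integral[OF joint g_meas density_nonneg] by (simp add: case_prod_beta split_beta')
qed

lemma borel_measurable_cis [measurable]: "cis \<in> borel_measurable borel"
  by (intro borel_measurable_continuous_onI continuous_on_cis continuous_on_id)

theorem lemma1: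
  fixes M :: "'a measure"
    and X1 X2 T1 T2 :: "'a \<Rightarrow> real"
    and p1 p2 :: "real \<Rightarrow> real"
    and W :: "real \<Rightarrow> real"
  assumes "prob_space M"
    and indep: "prob_space.indep_vars M (\<lambda>_. borel)
                  (\<lambda>i. if i = (0::nat) then X1 else if i = 1 then X2 else if i = 2 then T1 else T2)
                  {0, 1, 2, 3}"
    and p1_meas: "p1 \<in> borel_measurable borel" and p2_meas: "p2 \<in> borel_measurable borel"
    and p1_nonneg: "\<forall>x. p1 x \<ge> 0" and p2_nonneg: "\<forall>x. p2 x \<ge> 0"
    and p1_supp: "\<forall>x<0. p1 x = 0" and p2_supp: "\<forall>x<0. p2 x = 0"
    and X1_dens: "distributed M lborel X1 (\<lambda>x. ennreal (p1 x))"
    and X2_dens: "distributed M lborel X2 (\<lambda>x. ennreal (p2 x))"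
    and T1_unif: "distributed M lborel T1 (indicator {0..1})"
    and T2_unif: "distributed M lborel T2 (indicator {0..1})"
    and W_def: "\<forall>s. W s = prob_space.expectation M
                  (\<lambda>\<omega>. cmod (walk2 (X1 \<omega>) (X2 \<omega>) (T1 \<omega>) (T2 \<omega>)) powr s)"
    and nice: "\<exists>\<epsilon>>0. integrable M (\<lambda>\<omega>. cmod (walk2 (X1 \<omega>) (X2 \<omega>) (T1 \<omega>) (T2 \<omega>)) powr \<epsilon>)
                   \<and> integrable M (\<lambda>\<omega>. cmod (walk2 (X1 \<omega>) (X2 \<omega>) (T1 \<omega>) (T2 \<omega>)) powr (-\<epsilon>))"
  shows "(W has_real_derivative
            prob_space.expectation M (\<lambda>\<omega>. ln (cmod (walk2 (X1 \<omega>) (X2 \<omega>) (T1 \<omega>) (T2 \<omega>))))) (at 0)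
         \<and> prob_space.expectation M (\<lambda>\<omega>. ln (cmod (walk2 (X1 \<omega>) (X2 \<omega>) (T1 \<omega>) (T2 \<omega>))))
            = (LINT x:{0..}|lborel. LINT y:{0..}|lborel. p1 x * p2 y * max (ln x) (ln y))"
proof -
  interpret prob_space M by fact
  define R where "R \<omega> = cmod (walk2 (X1 \<omega>) (X2 \<omega>) (T1 \<omega>) (T2 \<omega>))" for \<omega>
  define f :: "nat \<Rightarrow> real \<Rightarrow> real" where
    "f i = (if i = 0 then p1 else if i = 1 then p2 else indicator {0..1})" for i
  obtain e where e: "0 < e" "integrable M (\<lambda>\<omega>. R \<omega> powr e)" "integrable M (\<lambda>\<omega>. R \<omega> powr (- e))"
    using nice unfolding R_def by blast
  have [measurable]: "R \<in> borel_measurable M"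
    using X1_dens X2_dens T1_unif T2_unif unfolding R_def walk2_def
    by (auto dest!: distributed_measurable)
  have "(W has_real_derivative expectation (\<lambda>\<omega>. ln (R \<omega>))) (at 0)"
    using has_real_derivative_integral_powr_0[of R, OF _ _ e] W_def by (simp add: R_def fun_eq_iff[symmetric])
  moreover have "integrable M (\<lambda>\<omega>. ln (R \<omega>))"
    by (rule integrable_ln_if_integrable_powr[OF _ _ e]) (measurable, simp add: R_def)
  moreover have "distributed M lborel (if i = 0 then X1 else if i = 1 then X2 else if i = 2 then T1 else T2)
      (\<lambda>x. ennreal (f i x))" if "i \<in> {0, 1, 2, 3}" for i
    using that X1_dens X2_dens T1_unif T2_unif by (auto simp: f_def ennreal_indicator)
  moreover have "0 \<le> f i x" "f i \<in> borel_measurable borel" for i x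
    using p1_nonneg p2_nonneg p1_meas p2_meas by (auto simp: f_def)
  moreover have "(\<lambda>(((x, y), s), t). ln (cmod (walk2 x y s t)))
      \<in> borel_measurable (((lborel \<Otimes>\<^sub>M lborel) \<Otimes>\<^sub>M lborel) \<Otimes>\<^sub>M lborel)"
    unfolding walk2_def split_beta' by measurable
  ultimately show ?thesis
    using expectation_indep_vars_nested_pairs[OF indep, of f "\<lambda>x y s t. ln (cmod (walk2 x y s t))"]
      integral_ln_norm_walk2_density[OF p1_meas p2_meas] p1_supp p2_supp
    by (simp add: R_def f_def)
qed

end
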